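(* Assume the network $\Sigma$ is well-posed, let $\mathcal{A}\subset X$ be nonempty and closed, and assume $f:X\times U\to X$ is $\mathcal{K}$-bounded with respect to $\mathcal{A}$, i.e. there are $\kappa_1,\kappa_2\in\mathcal{K}$ with $|f(\xi,\mu)|_{\mathcal{A}}\le\kappa_1(|\xi|_{\mathcal{A}})+\kappa_2(|\mu|_\infty)$ for all $\xi\in X$, $\mu\in U$. If there exists a finite-step ISS Lyapunov function for $\Sigma$ with respect to $\mathcal{A}$, then $\Sigma$ is ISS with respect to $\mathcal{A}$. Additionally, if $\kappa_1$ is linear, the existence of a finite-step eISS Lyapunov function for $\Sigma$ with respect to $\mathcal{A}$ implies that $\Sigma$ is eISS with respect to $\mathcal{A}$.
   Context: Setting: for each $i\in\mathbb{N}$ fix positive integers $n_i,p_i$, norms on $\mathbb{R}^{n_i},\mathbb{R}^{p_i}$, a finite $I_i\subset\mathbb{N}\setminus\{i\}$ with each $\{j: i\in I_j\}$ finite, and continuous $f_i:\mathbb{R}^{n_i}\times\prod_{j\in I_i}\mathbb{R}^{n_j}\times\mathbb{R}^{p_i}\to\mathbb{R}^{n_i}$. $X$ (resp. $U$) is the space of sequences $(x_i)$, $x_i\in\mathbb{R}^{n_i}$ (resp. $(u_i)$, $u_i\in\mathbb{R}^{p_i}$) with finite sup-norm $|\cdot|_\infty$; $X_E=\prod_i\mathbb{R}^{n_i}$; $f(x,u)_i=f_i(x_i,(x_j)_{j\in I_i},u_i)$; network $\Sigma$: $x(k+1)=f(x(k),u(k))$. $\Sigma$ is well-posed if $f(X\times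 U)\subset X$. $\mathcal{U}$: sequences $u:\mathbb{N}_0\to U$ with $\|u\|_\infty=\sup_k|u(k)|_\infty<\infty$; $x(k,\xi,u)$ the solution with $x(0)=\xi$. $|x|_{\mathcal{A}}=\inf_{y\in\mathcal{A}}|x-y|_\infty$. ISS w.r.t. $\mathcal{A}$: there are $\beta\in\mathcal{KL}$, $\gamma\in\mathcal{K}$ with $|x(k,\xi,u)|_{\mathcal{A}}\le\max\{\beta(|\xi|_{\mathcal{A}},k),\gamma(\|u\|_\infty)\}$ for all $\xi\in X,u\in\mathcal{U},k\in\mathbb{N}_0$; eISS: additionally $\beta(r,k)=C\rho^kr$ with $C\ge1,\rho\in[0,1)$. A continuous $V:X\to[0,\infty)$ is a finite-step ISS Lyapunov function for $\Sigma$ w.r.t. $\mathcal{A}$ if there exist $M\in\mathbb{N}$, $\underline\omega,\overline\omega,\alpha\in\mathcal{K}_\infty$ with $\alpha(s)<s$ for all $s>0$, and $\gamma\in\mathcal{K}$ such that for all $\xi\in X$, $u\in\mathcal{U}$: $\underline\omega(|\xi|_{\mathcal{A}})\le V(\xi)\le\overline\omega(|\xi|_{\mathcal{A}})$ and $V(x(M,\xi,u))\le\max\{\alpha(V(\xi)),\gamma(\|u\|_\infty)\}$. It is a finite-step eISS Lyapunov function if there exist $M\in\mathbb{N}$, constants $\underline w,\overline w,b>0$, $\kappa\in[0,1)$, $\gamma\in\mathcal{K}$ with $\underline w|\xi|_{\mathcal{A}}^b\le V(\xi)\le\overline w|\xi|_{\mathcal{A}}^b$ and $V(x(M,\xi,u))\le\max\{\kappa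 V(\xi),\gamma(\|u\|_\infty)\}$ for all $\xi\in X,u\in\mathcal{U}$. Comparison classes $\mathcal{K},\mathcal{K}_\infty,\mathcal{KL}$ are standard. *)

theory Defs
  imports "HOL-Analysis.Analysis"
begin

text \<open>Vectors in R^d are encoded as functions nat => real vanishing at all coordinates >= d.
  A state of the network is a sequence (nat => (nat => real)) of such vectors.\<close>

definition Vsp :: "nat \<Rightarrow> (nat \<Rightarrow> real) set" where
  "Vsp d = {v. \<forall>k\<ge>d. v k = 0}"

definition is_norm_on :: "(nat \<Rightarrow> real) set \<Rightarrow> ((nat \<Rightarrow> real) \<Rightarrow> real) \<Rightarrow> bool" where
  "is_norm_on S N \<longleftrightarrow>
     (\<forall>v\<in>S. 0 \<le> N v \<and> (N v = 0 \<longleftrightarrow> v = (\<lambda>k. 0))) \<and>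
     (\<forall>v\<in>S. \<forall>c. N (\<lambda>k. c * v k) = \<bar>c\<bar> * N v) \<and>
     (\<forall>v\<in>S. \<forall>w\<in>S. N (\<lambda>k. v k + w k) \<le> N v + N w)"

definition seqsp :: "(nat \<Rightarrow> nat) \<Rightarrow> (nat \<Rightarrow> (nat \<Rightarrow> real) \<Rightarrow> real) \<Rightarrow> (nat \<Rightarrow> nat \<Rightarrow> real) set" where
  "seqsp d N = {x. (\<forall>i. x i \<in> Vsp (d i)) \<and> bdd_above (range (\<lambda>i. N i (x i)))}"

definition supn :: "(nat \<Rightarrow> (nat \<Rightarrow> real) \<Rightarrow> real) \<Rightarrow> (nat \<Rightarrow> nat \<Rightarrow> real) \<Rightarrow> real" where
  "supn N x = (SUP i. N i (x i))"

definition nbr_dom :: "(nat \<Rightarrow> nat set) \<Rightarrow> (nat \<Rightarrow> nat) \<Rightarrow> nat \<Rightarrow> (nat \<Rightarrow> nat \<Rightarrow> real) set" where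
  "nbr_dom I d i = {y. \<forall>j. (j \<in> I i \<longrightarrow> y j \<in> Vsp (d j)) \<and> (j \<notin> I i \<longrightarrow> y j = (\<lambda>k. 0))}"

definition net_map ::
  "(nat \<Rightarrow> nat set) \<Rightarrow> (nat \<Rightarrow> (nat \<Rightarrow> real) \<Rightarrow> (nat \<Rightarrow> nat \<Rightarrow> real) \<Rightarrow> (nat \<Rightarrow> real) \<Rightarrow> (nat \<Rightarrow> real))
   \<Rightarrow> (nat \<Rightarrow> nat \<Rightarrow> real) \<Rightarrow> (nat \<Rightarrow> nat \<Rightarrow> real) \<Rightarrow> (nat \<Rightarrow> nat \<Rightarrow> real)" where
  "net_map I ff x u = (\<lambda>i. ff i (x i) (\<lambda>j. if j \<in> I i then x j else (\<lambda>k. 0)) (u i))"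

text \<open>Standing assumptions on the data of the network.  Continuity of f_i is w.r.t. the
  (product = Euclidean) topology on R^{n_i} x prod_{j in I_i} R^{n_j} x R^{p_i}.\<close>
definition network_setting ::
  "(nat \<Rightarrow> nat) \<Rightarrow> (nat \<Rightarrow> nat) \<Rightarrow> (nat \<Rightarrow> (nat \<Rightarrow> real) \<Rightarrow> real) \<Rightarrow> (nat \<Rightarrow> (nat \<Rightarrow> real) \<Rightarrow> real)
   \<Rightarrow> (nat \<Rightarrow> nat set)
   \<Rightarrow> (nat \<Rightarrow> (nat \<Rightarrow> real) \<Rightarrow> (nat \<Rightarrow> nat \<Rightarrow> real) \<Rightarrow> (nat \<Rightarrow> real) \<Rightarrow> (nat \<Rightarrow> real)) \<Rightarrow> bool" where
  "network_setting n p nx np I ff \<longleftrightarrow>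
     (\<forall>i. 0 < n i \<and> 0 < p i) \<and>
     (\<forall>i. is_norm_on (Vsp (n i)) (nx i) \<and> is_norm_on (Vsp (p i)) (np i)) \<and>
     (\<forall>i. finite (I i) \<and> i \<notin> I i \<and> finite {j. i \<in> I j}) \<and>
     (\<forall>i. continuous_on (Vsp (n i) \<times> nbr_dom I n i \<times> Vsp (p i)) (\<lambda>(a, b, c). ff i a b c)) \<and>
     (\<forall>i. \<forall>a\<in>Vsp (n i). \<forall>b\<in>nbr_dom I n i. \<forall>c\<in>Vsp (p i). ff i a b c \<in> Vsp (n i))"

definition well_posed where
  "well_posed n p nx np I ff \<longleftrightarrow> (\<forall>x\<in>seqsp n nx. \<forall>u\<in>seqsp p np. net_map I ff x u \<in> seqsp n nx)"

definition inp_seqs :: "(nat \<Rightarrow> nat) \<Rightarrow> (nat \<Rightarrow> (nat \<Rightarrow> real) \<Rightarrow> real) \<Rightarrow> (nat \<Rightarrow> nat \<Rightarrow> nat \<Rightarrow> real) set" where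
  "inp_seqs p np = {u. (\<forall>k. u k \<in> seqsp p np) \<and> bdd_above (range (\<lambda>k. supn np (u k)))}"

definition linf :: "(nat \<Rightarrow> (nat \<Rightarrow> real) \<Rightarrow> real) \<Rightarrow> (nat \<Rightarrow> nat \<Rightarrow> nat \<Rightarrow> real) \<Rightarrow> real" where
  "linf np u = (SUP k. supn np (u k))"

primrec traj :: "('x \<Rightarrow> 'u \<Rightarrow> 'x) \<Rightarrow> 'x \<Rightarrow> (nat \<Rightarrow> 'u) \<Rightarrow> nat \<Rightarrow> 'x" where
  "traj F xi u 0 = xi"
| "traj F xi u (Suc k) = F (traj F xi u k) (u k)"

definition setdist :: "(nat \<Rightarrow> (nat \<Rightarrow> real) \<Rightarrow> real) \<Rightarrow> (nat \<Rightarrow> nat \<Rightarrow> real) set \<Rightarrow> (nat \<Rightarrow> nat \<Rightarrow> real) \<Rightarrow> real" where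
  "setdist N A x = (INF y\<in>A. supn N (\<lambda>i k. x i k - y i k))"

text \<open>Closedness of A in the normed space (X, |.|_inf) (sequential closedness; X is a metric space).\<close>
definition closed_in_seqsp where
  "closed_in_seqsp n N A \<longleftrightarrow>
     (\<forall>s x. (\<forall>k. s k \<in> A) \<longrightarrow> x \<in> seqsp n N \<longrightarrow>
        (\<lambda>k. supn N (\<lambda>i j. s k i j - x i j)) \<longlonglongrightarrow> 0 \<longrightarrow> x \<in> A)"

definition classK :: "(real \<Rightarrow> real) \<Rightarrow> bool" where
  "classK g \<longleftrightarrow> g 0 = 0 \<and> continuous_on {0..} g \<and> strict_mono_on {0..} g"

definition classKinf :: "(real \<Rightarrow> real) \<Rightarrow> bool" where
  "classKinf g \<longleftrightarrow> classK g \<and> filterlim g at_top at_top"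

definition classKL :: "(real \<Rightarrow> real \<Rightarrow> real) \<Rightarrow> bool" where
  "classKL b \<longleftrightarrow> continuous_on ({0..} \<times> {0..}) (\<lambda>(r, t). b r t) \<and>
     (\<forall>t\<ge>0. classK (\<lambda>r. b r t)) \<and>
     (\<forall>r\<ge>0. (\<forall>t s. 0 \<le> t \<longrightarrow> t \<le> s \<longrightarrow> b r s \<le> b r t) \<and> ((\<lambda>t. b r t) \<longlongrightarrow> 0) at_top)"

definition is_ISS where
  "is_ISS X Us F dA nu \<longleftrightarrow> (\<exists>\<beta> \<gamma>. classKL \<beta> \<and> classK \<gamma> \<and>
     (\<forall>\<xi>\<in>X. \<forall>u\<in>Us. \<forall>k. dA (traj F \<xi> u k) \<le> max (\<beta> (dA \<xi>) (real k)) (\<gamma> (nu u))))"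

definition is_eISS where
  "is_eISS X Us F dA nu \<longleftrightarrow> (\<exists>C \<rho> \<gamma>. C \<ge> 1 \<and> 0 \<le> \<rho> \<and> \<rho> < 1 \<and> classK \<gamma> \<and>
     (\<forall>\<xi>\<in>X. \<forall>u\<in>Us. \<forall>k. dA (traj F \<xi> u k) \<le> max (C * \<rho> ^ k * dA \<xi>) (\<gamma> (nu u))))"

definition cont_on_seqsp where
  "cont_on_seqsp n N V \<longleftrightarrow> (\<forall>x\<in>seqsp n N. \<forall>e>0. \<exists>d>0. \<forall>y\<in>seqsp n N.
      supn N (\<lambda>i k. y i k - x i k) < d \<longrightarrow> \<bar>V y - V x\<bar> < e)"

definition fs_ISS_Lyap where
  "fs_ISS_Lyap n N Us F dA nu V \<longleftrightarrow> cont_on_seqsp n N V \<and> (\<forall>\<xi>\<in>seqsp n N. 0 \<le> V \<xi>) \<and>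
     (\<exists>M::nat. \<exists>wl wu \<alpha> \<gamma>. M \<ge> 1 \<and> classKinf wl \<and> classKinf wu \<and> classKinf \<alpha> \<and>
        (\<forall>s>0. \<alpha> s < s) \<and> classK \<gamma> \<and>
        (\<forall>\<xi>\<in>seqsp n N. \<forall>u\<in>Us. wl (dA \<xi>) \<le> V \<xi> \<and> V \<xi> \<le> wu (dA \<xi>) \<and>
           V (traj F \<xi> u M) \<le> max (\<alpha> (V \<xi>)) (\<gamma> (nu u))))"

definition fs_eISS_Lyap where
  "fs_eISS_Lyap n N Us F dA nu V \<longleftrightarrow> cont_on_seqsp n N V \<and> (\<forall>\<xi>\<in>seqsp n N. 0 \<le> V \<xi>) \<and>
     (\<exists>M::nat. \<exists>wl wu b \<kappa> \<gamma>. M \<ge> 1 \<and> wl > 0 \<and> wu > 0 \<and> b > 0 \<and> 0 \<le> \<kappa> \<and> \<kappa> < 1 \<and> classK \<gamma> \<and>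
        (\<forall>\<xi>\<in>seqsp n N. \<forall>u\<in>Us. wl * dA \<xi> powr b \<le> V \<xi> \<and> V \<xi> \<le> wu * dA \<xi> powr b \<and>
           V (traj F \<xi> u M) \<le> max (\<kappa> * V \<xi>) (\<gamma> (nu u))))"

end

(*
  Write k = j M + q with q < M. K-boundedness of f bounds |x(q)|_A by a class K function of
  |xi|_A + kappa2 (|u|), and iterating the M-step decrease of V along the time-shifted inputs
  gives V (x k) <= max (alpha^j (V (x q))) (gamma |u|). The sandwich bounds on V turn this into
  |x(k)|_A <= max (B (|xi|_A) k) (gamma' |u|), where B is nondecreasing in its first argument and
  tends to 0 in the second. Such a B is dominated by a KL function of product form
  sigma r * phi t, with phi the piecewise linear interpolant of a decreasing null sequence.
  In the exponential case everything is linear or a power, alpha^j is multiplication by kappa^j,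
  and the same estimate is directly of the form C rho^k |xi|_A.
*)

theory Submission
  imports Defs
begin

section \<open>Comparison functions\<close>

lemma classK_strict_mono: "classK g \<Longrightarrow> 0 \<le> s \<Longrightarrow> s < t \<Longrightarrow> g s < g t"
  unfolding classK_def strict_mono_on_def by auto

lemma classK_mono: "classK g \<Longrightarrow> 0 \<le> s \<Longrightarrow> s \<le> t \<Longrightarrow> g s \<le> g t"
  using classK_strict_mono[of g s t] by (cases "s = t") auto

lemma classK_nonneg: "classK g \<Longrightarrow> 0 \<le> s \<Longrightarrow> 0 \<le> g s"
  using classK_mono[of g 0 s] by (auto simp: classK_def)

lemma classK_pos: "classK g \<Longrightarrow> 0 < s \<Longrightarrow> 0 < g s"
  using classK_strict_mono[of g 0 s] by (auto simp: classK_def)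

lemma classK_le_self: "classK g \<Longrightarrow> (\<And>s. 0 < s \<Longrightarrow> g s < s) \<Longrightarrow> 0 \<le> s \<Longrightarrow> g s \<le> s"
  by (cases "s = 0") (auto simp: classK_def less_imp_le)

lemma classK_continuous_on: "classK g \<Longrightarrow> continuous_on {0..} g"
  by (simp add: classK_def)

lemma classK_max_distrib: "classK g \<Longrightarrow> 0 \<le> a \<Longrightarrow> 0 \<le> b \<Longrightarrow> g (max a b) = max (g a) (g b)"
  using classK_mono[of g a b] classK_mono[of g b a] by (auto simp: max_def)

lemma classK_add_le_max:
  "classK g \<Longrightarrow> 0 \<le> a \<Longrightarrow> 0 \<le> b \<Longrightarrow> g (a + b) \<le> max (g (2 * a)) (g (2 * b))"
  using classK_mono[of g "a + b" "2 * a"] classK_mono[of g "a + b" "2 * b"] by (cases "a \<le> b") auto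

lemma classK_id: "classK (\<lambda>s. s)"
  by (simp add: classK_def strict_mono_on_def)

lemma classK_add: "classK f \<Longrightarrow> classK g \<Longrightarrow> classK (\<lambda>s. f s + g s)"
  unfolding classK_def strict_mono_on_def by (auto intro!: continuous_on_add add_strict_mono)

lemma classK_max: "classK f \<Longrightarrow> classK g \<Longrightarrow> classK (\<lambda>s. max (f s) (g s))"
  unfolding classK_def strict_mono_on_def
  by (simp add: continuous_on_max) (metis max.strict_coboundedI1 max.strict_coboundedI2 max_def)

lemma classK_comp: "classK f \<Longrightarrow> classK g \<Longrightarrow> classK (\<lambda>s. f (g s))"
proof -
  assume f: "classK f" and g: "classK g"
  have "g ` {0..} \<subseteq> {0..}" using classK_nonneg[OF g] by auto
  then have "continuous_on {0..} (\<lambda>s. f (g s))"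
    using continuous_on_compose2[OF classK_continuous_on[OF f] classK_continuous_on[OF g]] by blast
  moreover have "strict_mono_on {0..} (\<lambda>s. f (g s))"
    using classK_strict_mono[OF f] classK_strict_mono[OF g] classK_nonneg[OF g]
    by (auto simp: strict_mono_on_def)
  ultimately show ?thesis using f g by (simp add: classK_def)
qed

lemma classK_cmult: "0 < c \<Longrightarrow> classK f \<Longrightarrow> classK (\<lambda>s. c * f s)"
  unfolding classK_def strict_mono_on_def by (auto intro!: continuous_intros)

lemma classK_powr: "0 < e \<Longrightarrow> classK (\<lambda>s. s powr e)"
  unfolding classK_def strict_mono_on_def
  by (auto intro: continuous_on_powr' continuous_intros powr_less_mono2)

lemma classK_funpow: "classK f \<Longrightarrow> classK (f ^^ i)"
proof (induction i)
  case 0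
  show ?case using classK_id by (simp add: id_def)
next
  case (Suc i)
  then show ?case using classK_comp[of f "f ^^ i"] by (simp add: comp_def)
qed

lemma continuous_on_atLeast_0I:
  fixes f :: "real \<Rightarrow> real"
  assumes "\<And>x. 0 \<le> x \<Longrightarrow> \<exists>T>x. continuous_on {0..T} f"
  shows "continuous_on {0..} f"
  unfolding continuous_on_eq_continuous_within
proof
  fix x :: real assume "x \<in> {0..}"
  then obtain T where T: "T > x" "continuous_on {0..T} f" using assms by auto
  have "at x within {0..} = at x within {0..T}"
    by (rule at_within_nhd[of _ "{..<T}"]) (use T in auto)
  then show "continuous (at x within {0..}) f"
    using T \<open>x \<in> {0..}\<close> by (simp add: continuous_on_eq_continuous_within)
qed

lemma classK_image_atLeastAtMost:
  assumes g: "classK g" and T: "0 \<le> T"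
  shows "g ` {0..T} = {0..g T}"
proof
  show "g ` {0..T} \<subseteq> {0..g T}" using classK_mono[OF g] classK_nonneg[OF g] by auto
  have cont: "continuous_on {0..T} g"
    using classK_continuous_on[OF g] by (rule continuous_on_subset) auto
  show "{0..g T} \<subseteq> g ` {0..T}"
  proof
    fix y assume "y \<in> {0..g T}"
    then obtain s where "0 \<le> s" "s \<le> T" "g s = y"
      using IVT'[OF _ _ T cont, of y] g by (auto simp: classK_def)
    then show "y \<in> g ` {0..T}" by auto
  qed
qed

lemma classKinf_imp_classK: "classKinf g \<Longrightarrow> classK g"
  by (simp add: classKinf_def)

lemma classKinf_unbounded: "classKinf g \<Longrightarrow> \<exists>T\<ge>0. y < g T"
proof -
  assume "classKinf g"
  then have "eventually (\<lambda>x. y + 1 \<le> g x) at_top" by (simp add: classKinf_def filterlim_at_top)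
  then obtain N where "\<And>x. N \<le> x \<Longrightarrow> y + 1 \<le> g x" by (auto simp: eventually_at_top_linorder)
  then have "y < g (max N 0)" by (metis add.commute less_add_one max.cobounded1 order_less_le_trans)
  then show ?thesis by (intro exI[of _ "max N 0"]) simp
qed

lemma classKinf_inverse:
  assumes w: "classKinf w"
  obtains h where "classK h" "\<And>s. 0 \<le> s \<Longrightarrow> h (w s) = s"
proof
  have K: "classK w" using classKinf_imp_classK[OF w] .
  have inj: "inj_on w {0..}"
    using K by (auto simp: classK_def intro: strict_mono_on_imp_inj_on)
  define h where "h = the_inv_into {0..} w"
  show hw: "h (w s) = s" if "0 \<le> s" for s
    using the_inv_into_f_f[OF inj] that by (simp add: h_def)
  have local: "\<exists>T. 0 \<le> T \<and> y < w T \<and> continuous_on {0..w T} h" for y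
  proof -
    obtain T where T: "0 \<le> T" "y < w T" using classKinf_unbounded[OF w] by blast
    have "continuous_on (w ` {0..T}) h"
      using classK_continuous_on[OF K] by (intro continuous_on_inv) (auto intro: continuous_on_subset hw)
    then show ?thesis using T classK_image_atLeastAtMost[OF K T(1)] by auto
  qed
  have wh: "w (h y) = y \<and> 0 \<le> h y" if "0 \<le> y" for y
  proof -
    obtain T where "0 \<le> T" "y < w T" using classKinf_unbounded[OF w] by blast
    then have "y \<in> w ` {0..T}" using classK_image_atLeastAtMost[OF K, of T] that by auto
    then obtain s where "0 \<le> s" "w s = y" by auto
    then show ?thesis using hw by auto
  qed
  have "continuous_on {0..} h"
  proof (rule continuous_on_atLeast_0I)
    fix x :: real
    obtain T where "0 \<le> T" "x < w T" "continuous_on {0..w T} h" using local by blast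
    then show "\<exists>T>x. continuous_on {0..T} h" by blast
  qed
  moreover have "strict_mono_on {0..} h"
  proof (rule strict_mono_onI)
    fix r s :: real assume "r \<in> {0..}" "s \<in> {0..}" "r < s"
    then show "h r < h s"
      using wh[of r] wh[of s] classK_mono[OF K, of "h s" "h r"] by (force simp: not_less[symmetric])
  qed
  moreover have "h 0 = 0" using hw[of 0] K by (simp add: classK_def)
  ultimately show "classK h" by (simp add: classK_def)
qed

section \<open>KL majorants\<close>

definition lin_interp :: "(nat \<Rightarrow> real) \<Rightarrow> real \<Rightarrow> real" where
  "lin_interp a t = (let j = nat \<lfloor>t\<rfloor> in a j + (t - real j) * (a (Suc j) - a j))"

lemma lin_interp_segment:
  assumes "real j \<le> t" "t \<le> real j + 1"
  shows "lin_interp a t = a j + (t - real j) * (a (Suc j) - a j)"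
proof (cases "t = real j + 1")
  case True
  then have "nat \<lfloor>t\<rfloor> = Suc j" by simp
  then show ?thesis using True by (simp add: lin_interp_def algebra_simps)
next
  case False
  then have "nat \<lfloor>t\<rfloor> = j" using assms by linarith
  then show ?thesis by (simp add: lin_interp_def)
qed

lemma lin_interp_of_nat [simp]: "lin_interp a (real k) = a k"
  using lin_interp_segment[of k "real k" a] by simp

lemma continuous_on_lin_interp: "continuous_on {0..} (lin_interp a)"
proof (rule continuous_on_atLeast_0I)
  have "continuous_on {0..real N} (lin_interp a)" for N
  proof (induction N)
    case (Suc N)
    have "continuous_on {real N..real N + 1} (\<lambda>t. a N + (t - real N) * (a (Suc N) - a N))"
      by (intro continuous_intros)
    then have "continuous_on {real N..real N + 1} (lin_interp a)"
      by (rule continuous_on_cong[THEN iffD1, rotated -1]) (auto simp: lin_interp_segment)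
    then have "continuous_on ({0..real N} \<union> {real N..real N + 1}) (lin_interp a)"
      using Suc by (intro continuous_on_closed_Un) auto
    moreover have "{0..real N} \<union> {real N..real N + 1} = {0..real (Suc N)}" by auto
    ultimately show ?case by simp
  qed simp
  moreover fix x :: real
  obtain N :: nat where "x < real N" using reals_Archimedean2 by blast
  ultimately show "\<exists>T>x. continuous_on {0..T} (lin_interp a)" by blast
qed

context
  fixes a :: "nat \<Rightarrow> real"
  assumes dec: "\<And>k. a (Suc k) \<le> a k"
begin

lemma lin_interp_bounds:
  assumes "real j \<le> t" "t \<le> real j + 1"
  shows "a (Suc j) \<le> lin_interp a t" "lin_interp a t \<le> a j"
proof -
  have "(t - real j) * (a (Suc j) - a j) \<le> 0"
    using assms dec[of j] by (intro mult_nonneg_nonpos) auto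
  moreover have "1 * (a (Suc j) - a j) \<le> (t - real j) * (a (Suc j) - a j)"
    using assms dec[of j] by (intro mult_right_mono_neg) auto
  ultimately show "a (Suc j) \<le> lin_interp a t" "lin_interp a t \<le> a j"
    using lin_interp_segment[OF assms] by simp_all
qed

lemma lin_interp_antimono:
  assumes "0 \<le> t" "t \<le> s"
  shows "lin_interp a s \<le> lin_interp a t"
proof -
  define i j where "i = nat \<lfloor>t\<rfloor>" and "j = nat \<lfloor>s\<rfloor>"
  have t: "real i \<le> t" "t \<le> real i + 1" and s: "real j \<le> s" "s \<le> real j + 1"
    using assms unfolding i_def j_def by linarith+
  have "i \<le> j" unfolding i_def j_def using assms by (simp add: floor_mono nat_mono)
  show ?thesis
  proof (cases "i = j")
    case True
    have "(s - real i) * (a (Suc i) - a i) \<le> (t - real i) * (a (Suc i) - a i)"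
      using dec[of i] assms by (intro mult_right_mono_neg) auto
    then show ?thesis using lin_interp_segment[OF t] lin_interp_segment[OF s] True by simp
  next
    case False
    then have "a j \<le> a (Suc i)"
      using \<open>i \<le> j\<close> decseq_SucI[of a, OF dec] by (simp add: decseq_def)
    then show ?thesis using lin_interp_bounds[OF t] lin_interp_bounds[OF s] by linarith
  qed
qed

lemma lin_interp_tendsto:
  assumes "a \<longlonglongrightarrow> 0"
  shows "(lin_interp a \<longlongrightarrow> 0) at_top"
proof (rule tendsto_sandwich)
  have floor: "filterlim (\<lambda>t::real. nat \<lfloor>t\<rfloor>) sequentially at_top"
    by (rule filterlim_compose[OF filterlim_nat_sequentially filterlim_floor_sequentially])
  show "((\<lambda>t::real. a (Suc (nat \<lfloor>t\<rfloor>))) \<longlongrightarrow> 0) at_top"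
    using filterlim_compose[OF LIMSEQ_Suc[OF assms] floor] by simp
  show "((\<lambda>t::real. a (nat \<lfloor>t\<rfloor>)) \<longlongrightarrow> 0) at_top"
    using filterlim_compose[OF assms floor] by simp
  have "\<forall>\<^sub>F t in at_top. a (Suc (nat \<lfloor>t\<rfloor>)) \<le> lin_interp a t \<and> lin_interp a t \<le> a (nat \<lfloor>t\<rfloor>)"
    using eventually_ge_at_top[of "0::real"]
  proof eventually_elim
    case (elim t)
    then show ?case using lin_interp_bounds[of "nat \<lfloor>t\<rfloor>" t] by linarith
  qed
  then show "\<forall>\<^sub>F t in at_top. a (Suc (nat \<lfloor>t\<rfloor>)) \<le> lin_interp a t"
    and "\<forall>\<^sub>F t in at_top. lin_interp a t \<le> a (nat \<lfloor>t\<rfloor>)"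
    by (auto elim: eventually_mono)
qed

end

lemma classKL_product:
  assumes \<sigma>: "classK \<sigma>" and \<phi>: "continuous_on {0..} \<phi>" "\<And>t. 0 \<le> t \<Longrightarrow> 0 < \<phi> t"
    "\<And>t s. 0 \<le> t \<Longrightarrow> t \<le> s \<Longrightarrow> \<phi> s \<le> \<phi> t" "(\<phi> \<longlongrightarrow> 0) at_top"
  shows "classKL (\<lambda>r t. \<sigma> r * \<phi> t)"
  unfolding classKL_def
proof (intro conjI allI impI)
  have "continuous_on ({0..} \<times> {0..}) (\<lambda>x. \<sigma> (fst x))"
    by (rule continuous_on_compose2[OF classK_continuous_on[OF \<sigma>] continuous_on_fst]) auto
  moreover have "continuous_on ({0..} \<times> {0..}) (\<lambda>x. \<phi> (snd x))"
    by (rule continuous_on_compose2[OF \<phi>(1) continuous_on_snd]) auto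
  ultimately show "continuous_on ({0..} \<times> {0..}) (\<lambda>(r, t). \<sigma> r * \<phi> t)"
    using continuous_on_mult by (fastforce simp: case_prod_beta)
  show "classK (\<lambda>r. \<sigma> r * \<phi> t)" if "0 \<le> t" for t
    using classK_cmult[OF \<phi>(2)[OF that] \<sigma>] by (simp add: mult.commute)
  show "\<sigma> r * \<phi> s \<le> \<sigma> r * \<phi> t" if "0 \<le> r" "0 \<le> t" "t \<le> s" for r t s
    using that \<phi>(3) classK_nonneg[OF \<sigma>] by (simp add: mult_left_mono)
  show "((\<lambda>t. \<sigma> r * \<phi> t) \<longlongrightarrow> 0) at_top" for r
    using tendsto_mult_right_zero[OF \<phi>(4)] .
qed

lemma LIMSEQ_0_if_le_max_power:
  fixes \<psi> :: "nat \<Rightarrow> real" and B :: "nat \<Rightarrow> nat \<Rightarrow> real"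
  assumes nonneg: "\<And>k. 0 \<le> \<psi> k" and le: "\<And>k m. \<psi> k \<le> max (1 / 2 ^ m) (B m k)"
    and lim: "\<And>m. B m \<longlonglongrightarrow> 0"
  shows "\<psi> \<longlonglongrightarrow> 0"
proof (rule order_tendstoI)
  show "\<forall>\<^sub>F k in sequentially. e < \<psi> k" if "e < 0" for e :: real
    by (intro always_eventually allI) (meson nonneg that less_le_trans)
  fix e :: real assume e: "0 < e"
  obtain m :: nat where m: "(1 / 2) ^ m < e" using real_arch_pow_inv[OF e, of "1 / 2"] by auto
  show "\<forall>\<^sub>F k in sequentially. \<psi> k < e"
    using order_tendstoD(2)[OF lim e, of m]
  proof eventually_elim
    case (elim k)
    then show ?case using le[of k m] m by (simp add: power_one_over)
  qed
qed

lemma weighted_sup_majorant: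
  fixes B :: "nat \<Rightarrow> nat \<Rightarrow> real"
  assumes nonneg: "\<And>m k. 0 \<le> B m k"
    and mono: "\<And>m m' k. m \<le> m' \<Longrightarrow> B m k \<le> B m' k"
    and dec: "\<And>m k. B m (Suc k) \<le> B m k"
    and lim: "\<And>m. B m \<longlonglongrightarrow> 0"
  obtains \<psi> where "\<And>k. 0 \<le> \<psi> k" "\<And>k. \<psi> (Suc k) \<le> \<psi> k" "\<psi> \<longlonglongrightarrow> 0"
    "\<And>m k. min 1 (B m k) \<le> 2 ^ m * \<psi> k"
proof
  define w where "w k m = min 1 (B m k) / 2 ^ m" for k m
  define \<psi> where "\<psi> k = (SUP m. w k m)" for k
  have w_le: "w k m \<le> 1 / 2 ^ m" for k m
    unfolding w_def by (intro divide_right_mono) auto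
  have "w k m \<le> 1" for k m
    using w_le[of k m] by (simp add: order_trans[of _ "1 / 2 ^ m"])
  then have bdd: "bdd_above (range (w k))" for k
    by (intro bdd_aboveI2[of _ _ 1])
  have w_le_\<psi>: "w k m \<le> \<psi> k" for k m
    unfolding \<psi>_def by (rule cSUP_upper[OF _ bdd]) simp
  show "min 1 (B m k) \<le> 2 ^ m * \<psi> k" for m k
    using w_le_\<psi>[of k m] by (simp add: w_def field_simps)
  show \<psi>_nonneg: "0 \<le> \<psi> k" for k
    using w_le_\<psi>[of k 0] nonneg[of 0 k] by (simp add: w_def)
  show "\<psi> (Suc k) \<le> \<psi> k" for k
    unfolding \<psi>_def[of "Suc k"]
  proof (rule cSUP_least)
    fix m
    have "w (Suc k) m \<le> w k m"
      unfolding w_def using dec[of m k] by (intro divide_right_mono min.mono) auto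
    then show "w (Suc k) m \<le> \<psi> k" using w_le_\<psi>[of k m] by linarith
  qed simp
  have tail: "\<psi> k \<le> max (1 / 2 ^ m0) (B m0 k)" for k m0
    unfolding \<psi>_def
  proof (rule cSUP_least)
    fix m
    show "w k m \<le> max (1 / 2 ^ m0) (B m0 k)"
    proof (cases "m \<le> m0")
      case True
      have "w k m \<le> min 1 (B m k) / 1"
        unfolding w_def using nonneg[of m k] by (intro divide_left_mono) auto
      then have "w k m \<le> min 1 (B m k)" by simp
      also have "\<dots> \<le> B m0 k" by (rule min.coboundedI2) (rule mono[OF True])
      finally show ?thesis by simp
    next
      case False
      then have "(2::real) ^ m0 \<le> 2 ^ m" by (intro power_increasing) auto
      then have "w k m \<le> 1 / 2 ^ m0"
        using w_le[of k m] by (simp add: order_trans[OF _ divide_left_mono])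
      then show ?thesis by simp
    qed
  qed simp
  show "\<psi> \<longlonglongrightarrow> 0" by (rule LIMSEQ_0_if_le_max_power[OF \<psi>_nonneg tail lim])
qed

lemma two_power_le_exp: "(2::real) ^ n \<le> exp (real n)"
proof -
  have "(2::real) ^ n \<le> exp 1 ^ n" using exp_ge_add_one_self[of 1] by (intro power_mono) simp_all
  then show ?thesis by (simp add: exp_of_nat_mult[symmetric])
qed

lemma classK_geometric_weight:
  assumes c: "classK c"
  shows "classK (\<lambda>r. sqrt (c r * (1 + c r) * exp (r + 1)))"
  unfolding classK_def
proof (intro conjI)
  show "continuous_on {0..} (\<lambda>r. sqrt (c r * (1 + c r) * exp (r + 1)))"
    using classK_continuous_on[OF c] by (intro continuous_intros)
  show "sqrt (c 0 * (1 + c 0) * exp (0 + 1)) = 0" using c by (simp add: classK_def)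
  show "strict_mono_on {0..} (\<lambda>r. sqrt (c r * (1 + c r) * exp (r + 1)))"
  proof (rule strict_mono_onI)
    fix r s :: real assume "r \<in> {0..}" "s \<in> {0..}" "r < s"
    then have "c r < c s" "0 \<le> c r" using classK_strict_mono[OF c] classK_nonneg[OF c] by auto
    then have "c r * (1 + c r) < c s * (1 + c s)" by (intro mult_strict_mono) auto
    moreover have "exp (r + 1) < exp (s + 1)" using \<open>r < s\<close> by simp
    moreover have "0 \<le> c r * (1 + c r)" using \<open>0 \<le> c r\<close> by simp
    ultimately have "c r * (1 + c r) * exp (r + 1) < c s * (1 + c s) * exp (s + 1)"
      by (rule mult_strict_mono') simp_all
    then show "sqrt (c r * (1 + c r) * exp (r + 1)) < sqrt (c s * (1 + c s) * exp (s + 1))" by simp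
  qed
qed

lemma le_geometric_weight_mult:
  fixes B :: "real \<Rightarrow> nat \<Rightarrow> real" and c :: "real \<Rightarrow> real"
  assumes nonneg: "\<And>r k. 0 \<le> r \<Longrightarrow> 0 \<le> B r k"
    and mono: "\<And>r r' k. 0 \<le> r \<Longrightarrow> r \<le> r' \<Longrightarrow> B r k \<le> B r' k"
    and bounded: "\<And>r k. 0 \<le> r \<Longrightarrow> B r k \<le> c r" and c: "classK c"
    and B_\<psi>: "\<And>m. min 1 (B (real m) k) \<le> 2 ^ m * \<psi>" and \<psi>: "0 \<le> \<psi>" and r: "0 \<le> r"
  shows "B r k \<le> sqrt (c r * (1 + c r) * exp (r + 1)) * sqrt \<psi>"
proof -
  \<comment> \<open>B r k is at most both c r and (1 + c r) exp (r + 1) \<psi>, hence at most their geometric mean.\<close>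
  define R where "R = nat \<lceil>r\<rceil>"
  have R: "r \<le> real R" "real R \<le> r + 1" unfolding R_def using r by linarith+
  have c0: "0 \<le> c r" using classK_nonneg[OF c r] .
  have B0: "0 \<le> B r k" and BR0: "0 \<le> B (real R) k" using nonneg r by simp_all
  have "B r k \<le> max 1 (c r) * min 1 (B (real R) k)"
  proof (cases "B (real R) k \<le> 1")
    case True
    have "B r k \<le> 1 * min 1 (B (real R) k)" using mono[OF r R(1), of k] True by simp
    also have "\<dots> \<le> max 1 (c r) * min 1 (B (real R) k)" using BR0 by (intro mult_right_mono) auto
    finally show ?thesis .
  next
    case False
    have "B r k \<le> max 1 (c r)" using bounded[OF r, of k] by simp
    then show ?thesis using False by simp
  qed
  also have "\<dots> \<le> (1 + c r) * (2 ^ R * \<psi>)"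
    using B_\<psi>[of R] c0 BR0 by (intro mult_mono) auto
  also have "\<dots> \<le> (1 + c r) * (exp (r + 1) * \<psi>)"
  proof -
    have "exp (real R) \<le> exp (r + 1)" using R(2) by simp
    then have "(2::real) ^ R \<le> exp (r + 1)" using two_power_le_exp[of R] by linarith
    then show ?thesis using c0 \<psi> by (intro mult_left_mono mult_right_mono) auto
  qed
  finally have "B r k * B r k \<le> c r * ((1 + c r) * (exp (r + 1) * \<psi>))"
    using bounded[OF r, of k] B0 c0 by (intro mult_mono) auto
  then have "B r k \<le> sqrt (c r * (1 + c r) * exp (r + 1) * \<psi>)"
    by (intro real_le_rsqrt) (simp add: power2_eq_square mult.assoc)
  then show ?thesis by (simp only: real_sqrt_mult)
qed

lemma product_majorant:
  fixes B :: "real \<Rightarrow> nat \<Rightarrow> real" and c :: "real \<Rightarrow> real"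
  assumes nonneg: "\<And>r k. 0 \<le> r \<Longrightarrow> 0 \<le> B r k"
    and mono: "\<And>r r' k. 0 \<le> r \<Longrightarrow> r \<le> r' \<Longrightarrow> B r k \<le> B r' k"
    and dec: "\<And>r k. 0 \<le> r \<Longrightarrow> B r (Suc k) \<le> B r k"
    and lim: "\<And>r. 0 \<le> r \<Longrightarrow> B r \<longlonglongrightarrow> 0"
    and bounded: "\<And>r k. 0 \<le> r \<Longrightarrow> B r k \<le> c r" and c: "classK c"
  obtains \<sigma> a where "classK \<sigma>" "\<And>k. 0 < a k" "\<And>k. a (Suc k) \<le> a k" "a \<longlonglongrightarrow> 0"
    "\<And>r k. 0 \<le> r \<Longrightarrow> B r k \<le> \<sigma> r * a k"
proof -
  have "\<And>m k. 0 \<le> B (real m) k" "\<And>m m' k. m \<le> m' \<Longrightarrow> B (real m) k \<le> B (real m') k"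
    "\<And>m k. B (real m) (Suc k) \<le> B (real m) k" "\<And>m. B (real m) \<longlonglongrightarrow> 0"
    by (simp_all add: nonneg mono dec lim)
  then obtain \<psi> where \<psi>: "\<And>k. 0 \<le> \<psi> k" "\<And>k. \<psi> (Suc k) \<le> \<psi> k" "\<psi> \<longlonglongrightarrow> 0"
    and B_\<psi>: "\<And>m k. min 1 (B (real m) k) \<le> 2 ^ m * \<psi> k"
    by (rule weighted_sup_majorant[of "\<lambda>m. B (real m)"]) auto
  define \<sigma> where "\<sigma> r = sqrt (c r * (1 + c r) * exp (r + 1))" for r
  define a where "a k = sqrt (\<psi> k) + 1 / (real k + 1)" for k
  have "classK \<sigma>" unfolding \<sigma>_def by (rule classK_geometric_weight[OF c])
  moreover have "0 < a k" for k
    using \<psi>(1)[of k] by (simp add: a_def add_nonneg_pos)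
  moreover have "a (Suc k) \<le> a k" for k
    unfolding a_def using \<psi>(2)[of k] by (intro add_mono divide_left_mono) auto
  moreover have "(\<lambda>k. 1 / (real k + 1)) \<longlonglongrightarrow> 0"
    using LIMSEQ_inverse_real_of_nat by (simp add: inverse_eq_divide add.commute)
  then have "a \<longlonglongrightarrow> 0"
    unfolding a_def using tendsto_add[OF tendsto_real_sqrt[OF \<psi>(3)]] by simp
  moreover have "B r k \<le> \<sigma> r * a k" if r: "0 \<le> r" for r k
  proof -
    have "B r k \<le> \<sigma> r * sqrt (\<psi> k)" unfolding \<sigma>_def
      by (rule le_geometric_weight_mult[OF nonneg mono bounded c B_\<psi> \<psi>(1) r])
    also have "\<dots> \<le> \<sigma> r * a k"
      using classK_nonneg[OF \<open>classK \<sigma>\<close> r] by (intro mult_left_mono) (auto simp: a_def)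
    finally show ?thesis .
  qed
  ultimately show thesis using that by blast
qed

lemma KL_majorant:
  fixes B :: "real \<Rightarrow> nat \<Rightarrow> real" and c :: "real \<Rightarrow> real"
  assumes "\<And>r k. 0 \<le> r \<Longrightarrow> 0 \<le> B r k"
    and "\<And>r r' k. 0 \<le> r \<Longrightarrow> r \<le> r' \<Longrightarrow> B r k \<le> B r' k"
    and "\<And>r k. 0 \<le> r \<Longrightarrow> B r (Suc k) \<le> B r k"
    and "\<And>r. 0 \<le> r \<Longrightarrow> B r \<longlonglongrightarrow> 0"
    and "\<And>r k. 0 \<le> r \<Longrightarrow> B r k \<le> c r" and "classK c"
  obtains \<beta> where "classKL \<beta>" "\<And>r k. 0 \<le> r \<Longrightarrow> B r k \<le> \<beta> r (real k)"
proof -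
  obtain \<sigma> a where \<sigma>: "classK \<sigma>" and a: "\<And>k. 0 < a k" "\<And>k. a (Suc k) \<le> a k" "a \<longlonglongrightarrow> 0"
    and B: "\<And>r k. 0 \<le> r \<Longrightarrow> B r k \<le> \<sigma> r * a k"
    using product_majorant[OF assms] by blast
  have "0 < lin_interp a t" if "0 \<le> t" for t
    using lin_interp_bounds[where a = a, OF a(2), of "nat \<lfloor>t\<rfloor>" t] a(1)[of "Suc (nat \<lfloor>t\<rfloor>)"] that by linarith
  then have "classKL (\<lambda>r t. \<sigma> r * lin_interp a t)"
    using lin_interp_antimono[where a = a, OF a(2)] lin_interp_tendsto[where a = a, OF a(2,3)]
    by (intro classKL_product \<sigma> continuous_on_lin_interp)
  then show ?thesis using that B by simp
qed

section \<open>Scalar recursions\<close>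

lemma funpow_antimono_index:
  fixes f :: "real \<Rightarrow> real"
  assumes f: "\<And>s. 0 \<le> s \<Longrightarrow> 0 \<le> f s" "\<And>s. 0 \<le> s \<Longrightarrow> f s \<le> s" and s: "0 \<le> s" and "i \<le> j"
  shows "(f ^^ j) s \<le> (f ^^ i) s"
proof -
  have "0 \<le> (f ^^ n) s" for n using s f(1) by (induction n) auto
  then have "decseq (\<lambda>n. (f ^^ n) s)" using f(2) by (intro decseq_SucI) simp
  then show ?thesis using \<open>i \<le> j\<close> by (simp add: decseq_def)
qed

lemma funpow_mono_index:
  fixes f :: "real \<Rightarrow> real"
  assumes f: "\<And>s. 0 \<le> s \<Longrightarrow> s \<le> f s" and s: "0 \<le> s" and "i \<le> j"
  shows "(f ^^ i) s \<le> (f ^^ j) s"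
proof -
  have "s \<le> (f ^^ n) s" for n using s f by (induction n) (auto intro: order_trans)
  then have "incseq (\<lambda>n. (f ^^ n) s)" using f s by (intro incseq_SucI) (simp add: order_trans[OF s])
  then show ?thesis using \<open>i \<le> j\<close> by (simp add: incseq_def)
qed

lemma funpow_linear:
  fixes f :: "real \<Rightarrow> real"
  assumes "\<And>s. 0 \<le> s \<Longrightarrow> f s = a * s" "0 \<le> a" "0 \<le> s"
  shows "(f ^^ i) s = a ^ i * s"
  by (induction i) (simp_all add: assms)

lemma funpow_tendsto_0:
  fixes \<alpha> :: "real \<Rightarrow> real"
  assumes \<alpha>: "classK \<alpha>" "\<And>s. 0 < s \<Longrightarrow> \<alpha> s < s" and s: "0 \<le> s"
  shows "(\<lambda>j. (\<alpha> ^^ j) s) \<longlonglongrightarrow> 0"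
proof -
  note le = classK_le_self[OF \<alpha>]
  define a where "a j = (\<alpha> ^^ j) s" for j
  have a0: "0 \<le> a j" for j unfolding a_def using classK_nonneg[OF classK_funpow[OF \<alpha>(1)] s] .
  have "decseq a"
    unfolding a_def using funpow_antimono_index[OF classK_nonneg[OF \<alpha>(1)] le s] by (simp add: decseq_def)
  then obtain L where L: "a \<longlonglongrightarrow> L" using a0 by (metis decseq_convergent)
  have L0: "0 \<le> L" using L a0 by (intro LIMSEQ_le_const) auto
  have "(\<lambda>j. \<alpha> (a j)) \<longlonglongrightarrow> \<alpha> L"
    using a0 L0 by (intro continuous_on_tendsto_compose[OF classK_continuous_on[OF \<alpha>(1)] L]) auto
  moreover have "(\<lambda>j. \<alpha> (a j)) \<longlonglongrightarrow> L" using LIMSEQ_Suc[OF L] by (simp add: a_def)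
  ultimately have "\<alpha> L = L" by (rule LIMSEQ_unique)
  then have "L = 0" using \<alpha>(2)[of L] L0 by fastforce
  then show ?thesis using L by (simp add: a_def[abs_def])
qed

lemma KL_majorant_funpow:
  fixes \<alpha> h a :: "real \<Rightarrow> real"
  assumes h: "classK h" and a: "classK a" and \<alpha>: "classK \<alpha>" "\<And>s. 0 < s \<Longrightarrow> \<alpha> s < s"
    and M: "0 < M"
  obtains \<beta> where "classKL \<beta>" "\<And>r k. 0 \<le> r \<Longrightarrow> h ((\<alpha> ^^ (k div M)) (a r)) \<le> \<beta> r (real k)"
proof -
  note \<alpha>_le = classK_le_self[OF \<alpha>]
  have \<alpha>j: "classK (\<alpha> ^^ j)" for j by (rule classK_funpow[OF \<alpha>(1)])
  define B where "B r k = h ((\<alpha> ^^ (k div M)) (a r))" for r k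
  have "0 \<le> B r k" if "0 \<le> r" for r k
    unfolding B_def using classK_nonneg[OF h] classK_nonneg[OF \<alpha>j] classK_nonneg[OF a] that by simp
  moreover have "B r k \<le> B r' k" if "0 \<le> r" "r \<le> r'" for r r' k
    unfolding B_def using classK_mono[OF classK_comp[OF h classK_comp[OF \<alpha>j a]] that] .
  moreover have "B r (Suc k) \<le> B r k" if "0 \<le> r" for r k
    unfolding B_def using div_le_mono[OF le_SucI[OF order_refl], of k M] classK_nonneg[OF a that]
    by (intro classK_mono[OF h] classK_nonneg[OF \<alpha>j] funpow_antimono_index[OF classK_nonneg[OF \<alpha>(1)] \<alpha>_le])
  moreover have "B r \<longlonglongrightarrow> 0" if "0 \<le> r" for r
  proof -
    have "(\<lambda>k. (\<alpha> ^^ (k div M)) (a r)) \<longlonglongrightarrow> 0"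
      using filterlim_compose[OF funpow_tendsto_0[OF \<alpha> classK_nonneg[OF a that]]
          filterlim_at_top_div_const_nat[OF M]] .
    then have "(\<lambda>k. h ((\<alpha> ^^ (k div M)) (a r))) \<longlonglongrightarrow> h 0"
      using classK_nonneg[OF \<alpha>j classK_nonneg[OF a that]]
      by (intro continuous_on_tendsto_compose[OF classK_continuous_on[OF h]]) auto
    then show ?thesis using h by (simp add: B_def[abs_def] classK_def)
  qed
  moreover have "B r k \<le> h (a r)" if "0 \<le> r" for r k
    unfolding B_def using classK_nonneg[OF a that]
    by (intro classK_mono[OF h] classK_nonneg[OF \<alpha>j] funpow_antimono_index[OF classK_nonneg[OF \<alpha>(1)] \<alpha>_le, of _ 0, simplified])
  moreover have "classK (\<lambda>r. h (a r))" by (rule classK_comp[OF h a])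
  ultimately obtain \<beta> where "classKL \<beta>" "\<And>r k. 0 \<le> r \<Longrightarrow> B r k \<le> \<beta> r (real k)"
    by (rule KL_majorant) auto
  then show thesis using that by (simp add: B_def)
qed

lemma growth_bound_funpow:
  fixes d :: "nat \<Rightarrow> real"
  assumes \<kappa>: "classK \<kappa>" and d: "\<And>k. 0 \<le> d k" and v: "0 \<le> v"
    and step: "\<And>k. d (Suc k) \<le> \<kappa> (d k) + v"
  shows "d i \<le> ((\<lambda>s. s + \<kappa> s) ^^ i) (d 0 + v)"
proof (induction i)
  case 0
  show ?case using v by simp
next
  case (Suc i)
  have "d 0 + v \<le> ((\<lambda>s. s + \<kappa> s) ^^ i) (d 0 + v)"
    using funpow_mono_index[of "\<lambda>s. s + \<kappa> s" "d 0 + v" 0 i] classK_nonneg[OF \<kappa>] d v by simp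
  moreover have "\<kappa> (d i) \<le> \<kappa> (((\<lambda>s. s + \<kappa> s) ^^ i) (d 0 + v))"
    by (rule classK_mono[OF \<kappa> d Suc.IH])
  ultimately show ?case using step[of i] d[of 0] by simp
qed

lemma funpow_max_bound:
  fixes v :: "nat \<Rightarrow> real"
  assumes \<alpha>: "classK \<alpha>" "\<And>s. 0 \<le> s \<Longrightarrow> \<alpha> s \<le> s" and v: "\<And>j. 0 \<le> v j" and g: "0 \<le> g"
    and step: "\<And>j. v (Suc j) \<le> max (\<alpha> (v j)) g"
  shows "v j \<le> max ((\<alpha> ^^ j) (v 0)) g"
proof (induction j)
  case (Suc j)
  have "\<alpha> (v j) \<le> \<alpha> (max ((\<alpha> ^^ j) (v 0)) g)"
    by (rule classK_mono[OF \<alpha>(1) v Suc.IH])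
  also have "\<dots> = max ((\<alpha> ^^ Suc j) (v 0)) (\<alpha> g)"
    using classK_max_distrib[OF \<alpha>(1) classK_nonneg[OF classK_funpow[OF \<alpha>(1)] v] g] by simp
  finally show ?case using step[of j] \<alpha>(2)[OF g] by (simp add: max_def split: if_splits)
qed simp

lemma le_root_if_powr_le:
  fixes d :: real
  assumes "0 \<le> d" "0 < b" "0 < w" "w * d powr b \<le> y"
  shows "d \<le> (y / w) powr (1 / b)"
proof -
  have "d = (d powr b) powr (1 / b)" using assms by (simp add: powr_powr)
  also have "\<dots> \<le> (y / w) powr (1 / b)"
    using assms by (intro powr_mono2) (auto simp: field_simps)
  finally show ?thesis .
qed

lemma power_div_le_powr:
  fixes \<rho> :: real
  assumes "0 < \<rho>" "\<rho> < 1" "0 < M"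
  shows "\<rho> ^ (k div M) \<le> (\<rho> powr (1 / real M)) ^ k / \<rho>"
proof -
  have "k = k div M * M + k mod M" by (rule div_mult_mod_eq[symmetric])
  moreover have "k mod M < M" using assms(3) by simp
  ultimately have "k < k div M * M + M" by linarith
  then have "real k \<le> real (Suc (k div M)) * real M"
    by (metis less_imp_le mult_Suc add.commute of_nat_le_iff of_nat_mult)
  then have "real k / real M \<le> real (Suc (k div M))"
    using assms(3) by (simp add: divide_le_eq)
  then have "\<rho> powr real (Suc (k div M)) \<le> \<rho> powr (real k / real M)"
    using assms by (intro powr_mono') auto
  then have "\<rho> ^ Suc (k div M) \<le> \<rho> powr (real k / real M)"
    unfolding powr_realpow[OF assms(1)] .
  also have "\<rho> powr (real k / real M) = (\<rho> powr (1 / real M)) ^ k"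
    using assms by (simp add: powr_powr flip: powr_realpow)
  finally show ?thesis using assms(1) by (simp add: field_simps)
qed

lemma exponential_bound_if_powr_le:
  fixes d r :: real
  assumes d: "0 \<le> d" and r: "0 \<le> r" and b: "0 < b" and wl: "0 < wl" and wu: "0 < wu"
    and \<kappa>: "0 < \<kappa>" "\<kappa> < 1" and M: "0 < M"
    and le: "wl * d powr b \<le> \<kappa> ^ (k div M) * (wu * r powr b)"
  shows "d \<le> ((\<kappa> powr (1 / b)) powr (1 / real M)) ^ k / \<kappa> powr (1 / b) * (wu / wl) powr (1 / b) * r"
proof -
  define \<rho> where "\<rho> = \<kappa> powr (1 / b)"
  have \<rho>: "0 < \<rho>" "\<rho> < 1" unfolding \<rho>_def using \<kappa> b powr_less_mono2[of "1 / b" \<kappa> 1] by auto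
  have "d \<le> (\<kappa> ^ (k div M) * (wu / wl) * r powr b) powr (1 / b)"
    using le_root_if_powr_le[OF d b wl le] by (simp add: field_simps)
  also have "\<dots> = \<rho> ^ (k div M) * (wu / wl) powr (1 / b) * r"
  proof -
    have "(\<kappa> ^ (k div M)) powr (1 / b) = \<rho> ^ (k div M)"
      unfolding \<rho>_def using \<kappa>(1) by (simp add: powr_powr powr_power mult.commute flip: powr_realpow)
    moreover have "(r powr b) powr (1 / b) = r" using b r by (simp add: powr_powr)
    ultimately show ?thesis by (simp only: powr_mult)
  qed
  also have "\<dots> \<le> (\<rho> powr (1 / real M)) ^ k / \<rho> * (wu / wl) powr (1 / b) * r"
    using power_div_le_powr[OF \<rho> M, of k] r by (intro mult_right_mono) auto
  finally show ?thesis unfolding \<rho>_def .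
qed

section \<open>Finite-step Lyapunov functions for K-bounded systems\<close>

lemma traj_add: "traj F \<xi> u (j + k) = traj F (traj F \<xi> u k) (\<lambda>i. u (i + k)) j"
  by (induction j) auto

locale K_bounded_system =
  fixes X :: "'x set" and Us :: "(nat \<Rightarrow> 'u) set" and F :: "'x \<Rightarrow> 'u \<Rightarrow> 'x"
    and dA :: "'x \<Rightarrow> real" and nu :: "(nat \<Rightarrow> 'u) \<Rightarrow> real" and \<kappa>1 \<kappa>2 :: "real \<Rightarrow> real"
  assumes step_in: "\<And>\<xi> u k. \<xi> \<in> X \<Longrightarrow> u \<in> Us \<Longrightarrow> F \<xi> (u k) \<in> X"
    and shift_in: "\<And>u m. u \<in> Us \<Longrightarrow> (\<lambda>i. u (i + m)) \<in> Us"
    and nu_shift_le: "\<And>u m. u \<in> Us \<Longrightarrow> nu (\<lambda>i. u (i + m)) \<le> nu u"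
    and dA_nonneg: "\<And>\<xi>. \<xi> \<in> X \<Longrightarrow> 0 \<le> dA \<xi>"
    and nu_nonneg: "\<And>u. u \<in> Us \<Longrightarrow> 0 \<le> nu u"
    and K1: "classK \<kappa>1" and K2: "classK \<kappa>2"
    and K_bounded: "\<And>\<xi> u k. \<xi> \<in> X \<Longrightarrow> u \<in> Us \<Longrightarrow> dA (F \<xi> (u k)) \<le> \<kappa>1 (dA \<xi>) + \<kappa>2 (nu u)"
begin

definition growth :: "nat \<Rightarrow> real \<Rightarrow> real" where
  "growth i = (\<lambda>s. s + \<kappa>1 s) ^^ i"

lemma classK_growth: "classK (growth i)"
  unfolding growth_def by (intro classK_funpow classK_add classK_id K1)

lemma growth_mono_index: "i \<le> j \<Longrightarrow> 0 \<le> s \<Longrightarrow> growth i s \<le> growth j s"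
  unfolding growth_def using classK_nonneg[OF K1] by (intro funpow_mono_index) auto

lemma traj_in: "\<xi> \<in> X \<Longrightarrow> u \<in> Us \<Longrightarrow> traj F \<xi> u k \<in> X"
  by (induction k) (auto intro: step_in)

lemma dist_traj_le:
  assumes \<xi>: "\<xi> \<in> X" and u: "u \<in> Us"
  shows "dA (traj F \<xi> u k) \<le> growth k (dA \<xi> + \<kappa>2 (nu u))"
proof -
  have "dA (traj F \<xi> u k) \<le> ((\<lambda>s. s + \<kappa>1 s) ^^ k) (dA (traj F \<xi> u 0) + \<kappa>2 (nu u))"
    using traj_in[OF \<xi> u] K_bounded[OF traj_in[OF \<xi> u] u]
    by (intro growth_bound_funpow[OF K1] dA_nonneg classK_nonneg[OF K2] nu_nonneg u) simp_all
  then show ?thesis by (simp add: growth_def)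
qed

lemma lyapunov_iterate:
  assumes \<alpha>: "classK \<alpha>" "\<And>s. 0 \<le> s \<Longrightarrow> \<alpha> s \<le> s" and \<gamma>: "classK \<gamma>"
    and V_nonneg: "\<And>\<xi>. \<xi> \<in> X \<Longrightarrow> 0 \<le> V \<xi>"
    and V_dec: "\<And>\<xi> u. \<xi> \<in> X \<Longrightarrow> u \<in> Us \<Longrightarrow> V (traj F \<xi> u M) \<le> max (\<alpha> (V \<xi>)) (\<gamma> (nu u))"
    and \<xi>: "\<xi> \<in> X" and u: "u \<in> Us"
  shows "V (traj F \<xi> u (j * M)) \<le> max ((\<alpha> ^^ j) (V \<xi>)) (\<gamma> (nu u))"
proof -
  have "V (traj F \<xi> u (Suc j * M)) \<le> max (\<alpha> (V (traj F \<xi> u (j * M)))) (\<gamma> (nu u))" for j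
  proof -
    let ?u = "\<lambda>i. u (i + j * M)"
    have "traj F \<xi> u (Suc j * M) = traj F (traj F \<xi> u (j * M)) ?u M"
      using traj_add[of F \<xi> u M "j * M"] by (simp add: add.commute)
    then have "V (traj F \<xi> u (Suc j * M)) \<le> max (\<alpha> (V (traj F \<xi> u (j * M)))) (\<gamma> (nu ?u))"
      using V_dec[OF traj_in[OF \<xi> u] shift_in[OF u]] by simp
    also have "\<dots> \<le> max (\<alpha> (V (traj F \<xi> u (j * M)))) (\<gamma> (nu u))"
      using classK_mono[OF \<gamma> nu_nonneg[OF shift_in[OF u]] nu_shift_le[OF u]] by (rule max.mono[OF order_refl])
    finally show ?thesis .
  qed
  then show ?thesis
    using funpow_max_bound[OF \<alpha>, of "\<lambda>j. V (traj F \<xi> u (j * M))" "\<gamma> (nu u)"]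
      V_nonneg[OF traj_in[OF \<xi> u]] classK_nonneg[OF \<gamma> nu_nonneg[OF u]] by simp
qed

lemma classK_dist_traj_le:
  assumes g: "classK g" and q: "q \<le> M" and \<xi>: "\<xi> \<in> X" and u: "u \<in> Us"
  shows "g (dA (traj F \<xi> u q)) \<le> max (g (growth M (2 * dA \<xi>))) (g (growth M (2 * \<kappa>2 (nu u))))"
proof -
  define r w where "r = dA \<xi>" and "w = \<kappa>2 (nu u)"
  have r: "0 \<le> r" and w: "0 \<le> w"
    unfolding r_def w_def using dA_nonneg[OF \<xi>] classK_nonneg[OF K2 nu_nonneg[OF u]] by auto
  have "dA (traj F \<xi> u q) \<le> growth M (r + w)"
    using dist_traj_le[OF \<xi> u, of q] growth_mono_index[OF q, of "r + w"] r w
    unfolding r_def w_def by linarith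
  then have "g (dA (traj F \<xi> u q)) \<le> g (growth M (r + w))"
    by (rule classK_mono[OF g dA_nonneg[OF traj_in[OF \<xi> u]]])
  also have "\<dots> \<le> max (g (growth M (2 * r))) (g (growth M (2 * w)))"
    using classK_add_le_max[OF classK_comp[OF g classK_growth] r w] .
  finally show ?thesis unfolding r_def w_def .
qed

lemma lyapunov_estimate:
  assumes M: "0 < M" and wl: "classK wl" and wu: "classK wu"
    and \<alpha>: "classK \<alpha>" "\<And>s. 0 \<le> s \<Longrightarrow> \<alpha> s \<le> s" and \<gamma>: "classK \<gamma>"
    and V_bounds: "\<And>\<xi>. \<xi> \<in> X \<Longrightarrow> wl (dA \<xi>) \<le> V \<xi> \<and> V \<xi> \<le> wu (dA \<xi>)"
    and V_dec: "\<And>\<xi> u. \<xi> \<in> X \<Longrightarrow> u \<in> Us \<Longrightarrow> V (traj F \<xi> u M) \<le> max (\<alpha> (V \<xi>)) (\<gamma> (nu u))"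
    and \<xi>: "\<xi> \<in> X" and u: "u \<in> Us"
  shows "wl (dA (traj F \<xi> u k)) \<le> max ((\<alpha> ^^ (k div M)) (wu (growth M (2 * dA \<xi>))))
           (max (wu (growth M (2 * \<kappa>2 (nu u)))) (\<gamma> (nu u)))"
proof -
  define q where "q = k mod M"
  define \<xi>' u' where "\<xi>' = traj F \<xi> u q" and "u' = (\<lambda>i. u (i + q))"
  define a b where "a = wu (growth M (2 * dA \<xi>))" and "b = wu (growth M (2 * \<kappa>2 (nu u)))"
  have \<xi>': "\<xi>' \<in> X" and u': "u' \<in> Us" unfolding \<xi>'_def u'_def using traj_in \<xi> u shift_in by auto
  have V_nonneg: "0 \<le> V x" if "x \<in> X" for x
    using V_bounds[OF that] classK_nonneg[OF wl dA_nonneg[OF that]] by linarith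
  have "traj F \<xi> u k = traj F \<xi>' u' (k div M * M)"
    using traj_add[of F \<xi> u "k div M * M" q] by (simp add: \<xi>'_def u'_def q_def)
  then have "wl (dA (traj F \<xi> u k)) \<le> V (traj F \<xi>' u' (k div M * M))"
    using V_bounds[OF traj_in[OF \<xi>' u']] by simp
  also have "\<dots> \<le> max ((\<alpha> ^^ (k div M)) (V \<xi>')) (\<gamma> (nu u'))"
    by (rule lyapunov_iterate[OF \<alpha> \<gamma> V_nonneg V_dec \<xi>' u'])
  also have "\<dots> \<le> max ((\<alpha> ^^ (k div M)) a) (max b (\<gamma> (nu u)))"
  proof -
    have \<alpha>j: "classK (\<alpha> ^^ (k div M))" by (rule classK_funpow[OF \<alpha>(1)])
    have ab: "0 \<le> a" "0 \<le> b" unfolding a_def b_def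
      using classK_nonneg[OF wu] classK_nonneg[OF classK_growth] dA_nonneg[OF \<xi>]
        classK_nonneg[OF K2 nu_nonneg[OF u]] by simp_all
    have "q \<le> M" using M by (simp add: q_def)
    have "V \<xi>' \<le> wu (dA \<xi>')" using V_bounds[OF \<xi>'] by simp
    also have "\<dots> \<le> max a b"
      unfolding \<xi>'_def a_def b_def by (rule classK_dist_traj_le[OF wu \<open>q \<le> M\<close> \<xi> u])
    finally have "(\<alpha> ^^ (k div M)) (V \<xi>') \<le> max ((\<alpha> ^^ (k div M)) a) ((\<alpha> ^^ (k div M)) b)"
      using classK_mono[OF \<alpha>j V_nonneg[OF \<xi>']] classK_max_distrib[OF \<alpha>j ab] by metis
    moreover have "(\<alpha> ^^ (k div M)) b \<le> b"
      using funpow_antimono_index[OF classK_nonneg[OF \<alpha>(1)] \<alpha>(2) ab(2), of 0 "k div M"] by simp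
    moreover have "\<gamma> (nu u') \<le> \<gamma> (nu u)"
      unfolding u'_def by (rule classK_mono[OF \<gamma> nu_nonneg[OF shift_in[OF u]] nu_shift_le[OF u]])
    ultimately show ?thesis by (simp add: max_def split: if_splits)
  qed
  finally show ?thesis unfolding a_def b_def .
qed

theorem ISS_if_finite_step_Lyapunov:
  assumes M: "0 < M" and wl: "classKinf wl" and wu: "classK wu"
    and \<alpha>: "classK \<alpha>" "\<And>s. 0 < s \<Longrightarrow> \<alpha> s < s" and \<gamma>: "classK \<gamma>"
    and V_bounds: "\<And>\<xi>. \<xi> \<in> X \<Longrightarrow> wl (dA \<xi>) \<le> V \<xi> \<and> V \<xi> \<le> wu (dA \<xi>)"
    and V_dec: "\<And>\<xi> u. \<xi> \<in> X \<Longrightarrow> u \<in> Us \<Longrightarrow> V (traj F \<xi> u M) \<le> max (\<alpha> (V \<xi>)) (\<gamma> (nu u))"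
  shows "is_ISS X Us F dA nu"
proof -
  obtain h where h: "classK h" and h_wl: "\<And>s. 0 \<le> s \<Longrightarrow> h (wl s) = s"
    using classKinf_inverse[OF wl] by blast
  define a where "a r = wu (growth M (2 * r))" for r
  have a: "classK a"
    unfolding a_def using classK_cmult[OF _ classK_id, of 2]
    by (intro classK_comp[OF wu] classK_comp[OF classK_growth]) simp
  obtain \<beta> where \<beta>: "classKL \<beta>" and h_\<beta>: "\<And>r k. 0 \<le> r \<Longrightarrow> h ((\<alpha> ^^ (k div M)) (a r)) \<le> \<beta> r (real k)"
    using KL_majorant_funpow[OF h a \<alpha> M] by blast
  define \<gamma>' where "\<gamma>' w = h (max (wu (growth M (2 * \<kappa>2 w))) (\<gamma> w))" for w
  have "classK \<gamma>'"
    unfolding \<gamma>'_def using classK_cmult[OF _ K2, of 2]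
    by (intro classK_comp[OF h] classK_max[OF _ \<gamma>] classK_comp[OF wu] classK_comp[OF classK_growth]) simp
  moreover have "dA (traj F \<xi> u k) \<le> max (\<beta> (dA \<xi>) (real k)) (\<gamma>' (nu u))"
    if \<xi>: "\<xi> \<in> X" and u: "u \<in> Us" for \<xi> u k
  proof -
    define A G where "A = (\<alpha> ^^ (k div M)) (a (dA \<xi>))"
      and "G = max (wu (growth M (2 * \<kappa>2 (nu u)))) (\<gamma> (nu u))"
    have A: "0 \<le> A" and G: "0 \<le> G"
      unfolding A_def G_def using classK_nonneg[OF classK_funpow[OF \<alpha>(1)]] classK_nonneg[OF a]
        dA_nonneg[OF \<xi>] classK_nonneg[OF \<gamma> nu_nonneg[OF u]] by (simp_all add: le_max_iff_disj)
    have "dA (traj F \<xi> u k) = h (wl (dA (traj F \<xi> u k)))"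
      using h_wl[OF dA_nonneg[OF traj_in[OF \<xi> u]]] by simp
    also have "\<dots> \<le> h (max A G)"
      using lyapunov_estimate[OF M classKinf_imp_classK[OF wl] wu \<alpha>(1) classK_le_self[OF \<alpha>] \<gamma>
          V_bounds V_dec \<xi> u, of k]
        classK_nonneg[OF classKinf_imp_classK[OF wl] dA_nonneg[OF traj_in[OF \<xi> u]]]
      unfolding A_def G_def a_def by (intro classK_mono[OF h]) auto
    also have "\<dots> = max (h A) (\<gamma>' (nu u))"
      unfolding classK_max_distrib[OF h A G] by (simp add: G_def \<gamma>'_def)
    also have "\<dots> \<le> max (\<beta> (dA \<xi>) (real k)) (\<gamma>' (nu u))"
      unfolding A_def using h_\<beta>[OF dA_nonneg[OF \<xi>]] by (rule max.mono[OF _ order_refl])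
    finally show ?thesis .
  qed
  ultimately show ?thesis unfolding is_ISS_def using \<beta> by blast
qed

lemma lyapunov_estimate_power:
  assumes lin: "\<And>s. 0 \<le> s \<Longrightarrow> \<kappa>1 s = c * s"
    and M: "0 < M" and wl: "0 < wl" and wu: "0 < wu" and b: "0 < b"
    and \<kappa>: "0 < \<kappa>" "\<kappa> < 1" and \<gamma>: "classK \<gamma>"
    and V_bounds: "\<And>\<xi>. \<xi> \<in> X \<Longrightarrow> wl * dA \<xi> powr b \<le> V \<xi> \<and> V \<xi> \<le> wu * dA \<xi> powr b"
    and V_dec: "\<And>\<xi> u. \<xi> \<in> X \<Longrightarrow> u \<in> Us \<Longrightarrow> V (traj F \<xi> u M) \<le> max (\<kappa> * V \<xi>) (\<gamma> (nu u))"
    and \<xi>: "\<xi> \<in> X" and u: "u \<in> Us"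
  shows "wl * dA (traj F \<xi> u k) powr b \<le> max (\<kappa> ^ (k div M) * (wu * ((1 + c) ^ M * (2 * dA \<xi>)) powr b))
           (max (wu * growth M (2 * \<kappa>2 (nu u)) powr b) (\<gamma> (nu u)))"
proof -
  have c: "0 \<le> c" using classK_pos[OF K1, of 1] lin[of 1] by simp
  have \<alpha>: "classK (\<lambda>s. \<kappa> * s)" using classK_cmult[OF \<kappa>(1) classK_id] by simp
  have \<alpha>_le: "\<kappa> * s \<le> s" if "0 \<le> s" for s using \<kappa> that by (intro mult_left_le_one_le) auto
  have wl': "classK (\<lambda>s. wl * s powr b)" and wu': "classK (\<lambda>s. wu * s powr b)"
    using classK_cmult[OF wl classK_powr[OF b]] classK_cmult[OF wu classK_powr[OF b]] .
  have "growth M (2 * dA \<xi>) = (1 + c) ^ M * (2 * dA \<xi>)"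
    unfolding growth_def using lin c dA_nonneg[OF \<xi>] by (intro funpow_linear) (auto simp: algebra_simps)
  moreover have "((\<lambda>s. \<kappa> * s) ^^ (k div M)) (wu * ((1 + c) ^ M * (2 * dA \<xi>)) powr b)
      = \<kappa> ^ (k div M) * (wu * ((1 + c) ^ M * (2 * dA \<xi>)) powr b)"
    using \<kappa>(1) wu by (intro funpow_linear) auto
  ultimately show ?thesis
    using lyapunov_estimate[OF M wl' wu' \<alpha> \<alpha>_le \<gamma> V_bounds V_dec \<xi> u, of k] by (simp only:)
qed

lemma eISS_if_finite_step_Lyapunov_pos_rate:
  assumes lin: "\<And>s. 0 \<le> s \<Longrightarrow> \<kappa>1 s = c * s"
    and M: "0 < M" and wl: "0 < wl" and wu: "0 < wu" and b: "0 < b"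
    and \<kappa>: "0 < \<kappa>" "\<kappa> < 1" and \<gamma>: "classK \<gamma>"
    and V_bounds: "\<And>\<xi>. \<xi> \<in> X \<Longrightarrow> wl * dA \<xi> powr b \<le> V \<xi> \<and> V \<xi> \<le> wu * dA \<xi> powr b"
    and V_dec: "\<And>\<xi> u. \<xi> \<in> X \<Longrightarrow> u \<in> Us \<Longrightarrow> V (traj F \<xi> u M) \<le> max (\<kappa> * V \<xi>) (\<gamma> (nu u))"
  shows "is_eISS X Us F dA nu"
proof -
  define \<rho>\<^sub>0 \<rho> where "\<rho>\<^sub>0 = \<kappa> powr (1 / b)" and "\<rho> = \<rho>\<^sub>0 powr (1 / real M)"
  have \<rho>\<^sub>0: "0 < \<rho>\<^sub>0" "\<rho>\<^sub>0 < 1"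
    unfolding \<rho>\<^sub>0_def using \<kappa> b powr_less_mono2[of "1 / b" \<kappa> 1] by auto
  have \<rho>: "0 \<le> \<rho>" "\<rho> < 1"
    unfolding \<rho>_def using \<rho>\<^sub>0 M powr_less_mono2[of "1 / real M" \<rho>\<^sub>0 1] by auto
  define C where "C = max 1 ((wu / wl) powr (1 / b) * (2 * (1 + c) ^ M) / \<rho>\<^sub>0)"
  define G where "G w = max (wu * growth M (2 * \<kappa>2 w) powr b) (\<gamma> w)" for w
  define \<gamma>' where "\<gamma>' w = (G w / wl) powr (1 / b)" for w
  have "classK (\<lambda>w. 2 * \<kappa>2 w)" using classK_cmult[OF _ K2, of 2] by simp
  then have "classK (\<lambda>w. wu * growth M (2 * \<kappa>2 w) powr b)"
    using classK_comp[OF classK_cmult[OF wu classK_powr[OF b]] classK_comp[OF classK_growth]] by simp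
  then have "classK G" unfolding G_def by (rule classK_max[OF _ \<gamma>])
  then have "classK (\<lambda>w. (1 / wl) * G w)" using classK_cmult[of "1 / wl" G] wl by simp
  then have "classK \<gamma>'"
    using classK_comp[OF classK_powr[of "1 / b"]] b by (simp add: \<gamma>'_def[abs_def])
  moreover have "dA (traj F \<xi> u k) \<le> max (C * \<rho> ^ k * dA \<xi>) (\<gamma>' (nu u))"
    if \<xi>: "\<xi> \<in> X" and u: "u \<in> Us" for \<xi> u k
  proof -
    define d r where "d = dA (traj F \<xi> u k)" and "r = dA \<xi>"
    have d: "0 \<le> d" and r: "0 \<le> r" unfolding d_def r_def using dA_nonneg traj_in \<xi> u by auto
    have "0 < c" using classK_pos[OF K1, of 1] lin[of 1] by simp
    have "wl * d powr b \<le> max (\<kappa> ^ (k div M) * (wu * ((1 + c) ^ M * (2 * r)) powr b)) (G (nu u))"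
      using lyapunov_estimate_power[OF lin M wl wu b \<kappa> \<gamma> V_bounds V_dec \<xi> u, of k]
      unfolding d_def r_def G_def .
    then consider "wl * d powr b \<le> G (nu u)"
      | "wl * d powr b \<le> \<kappa> ^ (k div M) * (wu * ((1 + c) ^ M * (2 * r)) powr b)"
      unfolding le_max_iff_disj by blast
    then show ?thesis
    proof cases
      case 1
      then have "d \<le> \<gamma>' (nu u)" unfolding \<gamma>'_def by (rule le_root_if_powr_le[OF d b wl])
      then show ?thesis by (simp add: d_def)
    next
      case 2
      have "d \<le> \<rho> ^ k / \<rho>\<^sub>0 * (wu / wl) powr (1 / b) * ((1 + c) ^ M * (2 * r))"
        unfolding \<rho>_def \<rho>\<^sub>0_def using \<open>0 < c\<close> r
        by (intro exponential_bound_if_powr_le[OF d _ b wl wu \<kappa> M 2]) simp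
      also have "\<dots> = ((wu / wl) powr (1 / b) * (2 * (1 + c) ^ M) / \<rho>\<^sub>0) * \<rho> ^ k * r"
        using \<rho>\<^sub>0(1) by (simp add: field_simps)
      also have "\<dots> \<le> C * \<rho> ^ k * r"
        unfolding C_def using \<rho> r by (intro mult_right_mono) auto
      finally show ?thesis by (simp add: d_def r_def)
    qed
  qed
  moreover have "1 \<le> C" by (simp add: C_def)
  ultimately show ?thesis unfolding is_eISS_def using \<rho> by blast
qed

theorem eISS_if_finite_step_Lyapunov:
  assumes lin: "\<And>s. 0 \<le> s \<Longrightarrow> \<kappa>1 s = c * s"
    and M: "0 < M" and wl: "0 < wl" and wu: "0 < wu" and b: "0 < b"
    and \<kappa>: "0 \<le> \<kappa>" "\<kappa> < 1" and \<gamma>: "classK \<gamma>"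
    and V_bounds: "\<And>\<xi>. \<xi> \<in> X \<Longrightarrow> wl * dA \<xi> powr b \<le> V \<xi> \<and> V \<xi> \<le> wu * dA \<xi> powr b"
    and V_dec: "\<And>\<xi> u. \<xi> \<in> X \<Longrightarrow> u \<in> Us \<Longrightarrow> V (traj F \<xi> u M) \<le> max (\<kappa> * V \<xi>) (\<gamma> (nu u))"
  shows "is_eISS X Us F dA nu"
proof (rule eISS_if_finite_step_Lyapunov_pos_rate[OF lin M wl wu b _ _ \<gamma> V_bounds])
  \<comment> \<open>Enlarging \<kappa> makes the decay rate a class K function also when \<kappa> = 0.\<close>
  define \<kappa>' where "\<kappa>' = max \<kappa> (1 / 2)"
  show "0 < \<kappa>'" "\<kappa>' < 1" using \<kappa> by (auto simp: \<kappa>'_def)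
  show "V (traj F \<xi> u M) \<le> max (\<kappa>' * V \<xi>) (\<gamma> (nu u))" if "\<xi> \<in> X" "u \<in> Us" for \<xi> u
  proof -
    have "0 \<le> wl * dA \<xi> powr b" using wl by simp
    then have "\<kappa> * V \<xi> \<le> \<kappa>' * V \<xi>"
      using V_bounds[OF that(1)] by (intro mult_right_mono) (auto simp: \<kappa>'_def)
    then show ?thesis using V_dec[OF that] by (simp add: max_def split: if_splits)
  qed
qed

end

lemma ISS_if_fs_ISS_Lyap:
  assumes "K_bounded_system (seqsp d N) Us F dA nu \<kappa>1 \<kappa>2" and u\<^sub>0: "u\<^sub>0 \<in> Us"
    and "fs_ISS_Lyap d N Us F dA nu V"
  shows "is_ISS (seqsp d N) Us F dA nu"
proof -
  interpret K_bounded_system "seqsp d N" Us F dA nu \<kappa>1 \<kappa>2 by fact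
  \<comment> \<open>The sandwich bounds in fs_ISS_Lyap are quantified over inputs as well.\<close>
  obtain M wl wu \<alpha> \<gamma> where M: "1 \<le> M" and wl: "classKinf wl" and wu: "classKinf wu"
    and \<alpha>: "classKinf \<alpha>" "\<forall>s>0. \<alpha> s < s" and \<gamma>: "classK \<gamma>"
    and L: "\<forall>\<xi>\<in>seqsp d N. \<forall>u\<in>Us. wl (dA \<xi>) \<le> V \<xi> \<and> V \<xi> \<le> wu (dA \<xi>)
       \<and> V (traj F \<xi> u M) \<le> max (\<alpha> (V \<xi>)) (\<gamma> (nu u))"
    using assms(3) unfolding fs_ISS_Lyap_def by blast
  show ?thesis
  proof (rule ISS_if_finite_step_Lyapunov[OF _ wl classKinf_imp_classK[OF wu]
        classKinf_imp_classK[OF \<alpha>(1)] _ \<gamma>])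
    show "0 < M" using M by simp
    show "\<alpha> s < s" if "0 < s" for s using \<alpha>(2) that by blast
    show "wl (dA \<xi>) \<le> V \<xi> \<and> V \<xi> \<le> wu (dA \<xi>)" if "\<xi> \<in> seqsp d N" for \<xi>
      using L[rule_format, OF that u\<^sub>0] by simp
    show "V (traj F \<xi> u M) \<le> max (\<alpha> (V \<xi>)) (\<gamma> (nu u))" if "\<xi> \<in> seqsp d N" "u \<in> Us" for \<xi> u
      using L[rule_format, OF that] by simp
  qed
qed

lemma eISS_if_fs_eISS_Lyap:
  assumes "K_bounded_system (seqsp d N) Us F dA nu \<kappa>1 \<kappa>2" and u\<^sub>0: "u\<^sub>0 \<in> Us"
    and c: "\<forall>s\<ge>0. \<kappa>1 s = c * s" and "fs_eISS_Lyap d N Us F dA nu V"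
  shows "is_eISS (seqsp d N) Us F dA nu"
proof -
  interpret K_bounded_system "seqsp d N" Us F dA nu \<kappa>1 \<kappa>2 by fact
  obtain M wl wu b \<kappa> \<gamma> where M: "1 \<le> M" and pos: "0 < wl" "0 < wu" "0 < b"
    and \<kappa>: "0 \<le> \<kappa>" "\<kappa> < 1" and \<gamma>: "classK \<gamma>"
    and L: "\<forall>\<xi>\<in>seqsp d N. \<forall>u\<in>Us. wl * dA \<xi> powr b \<le> V \<xi> \<and> V \<xi> \<le> wu * dA \<xi> powr b
       \<and> V (traj F \<xi> u M) \<le> max (\<kappa> * V \<xi>) (\<gamma> (nu u))"
    using assms(4) unfolding fs_eISS_Lyap_def by blast
  show ?thesis
  proof (rule eISS_if_finite_step_Lyapunov[OF _ _ pos \<kappa> \<gamma>])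
    show "\<kappa>1 s = c * s" if "0 \<le> s" for s using c that by blast
    show "0 < M" using M by simp
    show "wl * dA \<xi> powr b \<le> V \<xi> \<and> V \<xi> \<le> wu * dA \<xi> powr b" if "\<xi> \<in> seqsp d N" for \<xi>
      using L[rule_format, OF that u\<^sub>0] by simp
    show "V (traj F \<xi> u M) \<le> max (\<kappa> * V \<xi>) (\<gamma> (nu u))" if "\<xi> \<in> seqsp d N" "u \<in> Us" for \<xi> u
      using L[rule_format, OF that] by simp
  qed
qed

section \<open>Networks\<close>

lemma is_norm_on_diff_le:
  assumes N: "is_norm_on (Vsp d) N" and v: "v \<in> Vsp d" and w: "w \<in> Vsp d"
  shows "N (\<lambda>k. v k - w k) \<le> N v + N w"
proof -
  have triangle: "\<And>v w. v \<in> Vsp d \<Longrightarrow> w \<in> Vsp d \<Longrightarrow> N (\<lambda>k. v k + w k) \<le> N v + N w"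
    and scale: "\<And>v c. v \<in> Vsp d \<Longrightarrow> N (\<lambda>k. c * v k) = \<bar>c\<bar> * N v"
    using N unfolding is_norm_on_def by blast+
  have "(\<lambda>k. -1 * w k) \<in> Vsp d" using w by (simp add: Vsp_def)
  from triangle[OF v this] show ?thesis using scale[OF w, of "-1"] by simp
qed

lemma supn_upper: "x \<in> seqsp d N \<Longrightarrow> N i (x i) \<le> supn N x"
  unfolding supn_def seqsp_def by (rule cSUP_upper) simp_all

lemma supn_le_linf: "u \<in> inp_seqs d N \<Longrightarrow> supn N (u k) \<le> linf N u"
  unfolding inp_seqs_def linf_def by (rule cSUP_upper) simp_all

context
  fixes d :: "nat \<Rightarrow> nat" and N :: "nat \<Rightarrow> (nat \<Rightarrow> real) \<Rightarrow> real"
  assumes norms: "\<And>i. is_norm_on (Vsp (d i)) (N i)"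
begin

lemma supn_nonneg:
  assumes "x \<in> seqsp d N"
  shows "0 \<le> supn N x"
proof -
  have "0 \<le> N 0 (x 0)" using norms[of 0] assms by (simp add: is_norm_on_def seqsp_def)
  then show ?thesis using supn_upper[OF assms, of 0] by linarith
qed

lemma seqsp_diff:
  assumes x: "x \<in> seqsp d N" and y: "y \<in> seqsp d N"
  shows "(\<lambda>i k. x i k - y i k) \<in> seqsp d N"
proof -
  have "N i (\<lambda>k. x i k - y i k) \<le> supn N x + supn N y" for i
  proof -
    have "N i (\<lambda>k. x i k - y i k) \<le> N i (x i) + N i (y i)"
      using is_norm_on_diff_le[OF norms] x y by (simp add: seqsp_def)
    also have "\<dots> \<le> supn N x + supn N y" using supn_upper[OF x] supn_upper[OF y] by (rule add_mono)
    finally show ?thesis .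
  qed
  then have "bdd_above (range (\<lambda>i. N i (\<lambda>k. x i k - y i k)))" by (rule bdd_aboveI2)
  moreover have "(\<lambda>k. x i k - y i k) \<in> Vsp (d i)" for i using x y by (simp add: seqsp_def Vsp_def)
  ultimately show ?thesis by (simp add: seqsp_def)
qed

lemma setdist_nonneg:
  assumes "A \<subseteq> seqsp d N" "A \<noteq> {}" "x \<in> seqsp d N"
  shows "0 \<le> setdist N A x"
  unfolding setdist_def
proof (rule cINF_greatest)
  show "0 \<le> supn N (\<lambda>i k. x i k - y i k)" if "y \<in> A" for y
    using assms that by (intro supn_nonneg seqsp_diff) auto
qed (rule assms(2))

lemma linf_nonneg:
  assumes "u \<in> inp_seqs d N"
  shows "0 \<le> linf N u"
proof -
  have "0 \<le> supn N (u 0)" using assms by (intro supn_nonneg) (simp add: inp_seqs_def)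
  then show ?thesis using supn_le_linf[OF assms, of 0] by linarith
qed

lemma zero_in_inp_seqs: "(\<lambda>k i j. 0) \<in> inp_seqs d N"
proof -
  have "N i (\<lambda>k. 0) = 0" for i using norms[of i] by (simp add: is_norm_on_def Vsp_def)
  then show ?thesis by (simp add: inp_seqs_def seqsp_def Vsp_def)
qed

end

lemma inp_seqs_shift:
  assumes "u \<in> inp_seqs d N"
  shows "(\<lambda>i. u (i + m)) \<in> inp_seqs d N"
proof -
  have "range (\<lambda>k. supn N (u (k + m))) \<subseteq> range (\<lambda>k. supn N (u k))" by auto
  then show ?thesis using assms unfolding inp_seqs_def by (auto intro: bdd_above_mono)
qed

lemma linf_shift_le: "u \<in> inp_seqs d N \<Longrightarrow> linf N (\<lambda>i. u (i + m)) \<le> linf N u"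
  unfolding linf_def by (rule cSUP_least) (simp_all add: supn_le_linf[unfolded linf_def])

lemma network_K_bounded_system:
  assumes setting: "network_setting n p nx np I ff" and wp: "well_posed n p nx np I ff"
    and A: "A \<subseteq> seqsp n nx" "A \<noteq> {}" and K1: "classK \<kappa>1" and K2: "classK \<kappa>2"
    and Kbdd: "\<forall>\<xi>\<in>seqsp n nx. \<forall>\<mu>\<in>seqsp p np.
                 setdist nx A (net_map I ff \<xi> \<mu>) \<le> \<kappa>1 (setdist nx A \<xi>) + \<kappa>2 (supn np \<mu>)"
  shows "K_bounded_system (seqsp n nx) (inp_seqs p np) (net_map I ff) (setdist nx A) (linf np) \<kappa>1 \<kappa>2"
proof
  have nx: "\<And>i. is_norm_on (Vsp (n i)) (nx i)" and np: "\<And>i. is_norm_on (Vsp (p i)) (np i)"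
    using setting by (simp_all add: network_setting_def)
  have u_k: "u k \<in> seqsp p np" if "u \<in> inp_seqs p np" for u k
    using that by (simp add: inp_seqs_def)
  show "net_map I ff \<xi> (u k) \<in> seqsp n nx" if "\<xi> \<in> seqsp n nx" "u \<in> inp_seqs p np" for \<xi> u k
    using wp that u_k by (simp add: well_posed_def)
  show "0 \<le> setdist nx A \<xi>" if "\<xi> \<in> seqsp n nx" for \<xi>
    using setdist_nonneg[OF nx A that] .
  show "0 \<le> linf np u" if "u \<in> inp_seqs p np" for u
    using linf_nonneg[OF np that] .
  show "setdist nx A (net_map I ff \<xi> (u k)) \<le> \<kappa>1 (setdist nx A \<xi>) + \<kappa>2 (linf np u)"
    if "\<xi> \<in> seqsp n nx" "u \<in> inp_seqs p np" for \<xi> u k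
  proof -
    have "setdist nx A (net_map I ff \<xi> (u k)) \<le> \<kappa>1 (setdist nx A \<xi>) + \<kappa>2 (supn np (u k))"
      using Kbdd that(1) u_k[OF that(2)] by blast
    moreover have "\<kappa>2 (supn np (u k)) \<le> \<kappa>2 (linf np u)"
      using classK_mono[OF K2 supn_nonneg[OF np u_k[OF that(2)]] supn_le_linf[OF that(2)]] .
    ultimately show ?thesis by linarith
  qed
qed (fact K1 K2 | erule inp_seqs_shift linf_shift_le)+

theorem proposition2:
  fixes n p :: "nat \<Rightarrow> nat"
    and nx np :: "nat \<Rightarrow> (nat \<Rightarrow> real) \<Rightarrow> real"
    and I :: "nat \<Rightarrow> nat set"
    and ff :: "nat \<Rightarrow> (nat \<Rightarrow> real) \<Rightarrow> (nat \<Rightarrow> nat \<Rightarrow> real) \<Rightarrow> (nat \<Rightarrow> real) \<Rightarrow> (nat \<Rightarrow> real)"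
    and A :: "(nat \<Rightarrow> nat \<Rightarrow> real) set"
    and \<kappa>1 \<kappa>2 :: "real \<Rightarrow> real"
  assumes setting: "network_setting n p nx np I ff"
    and wp: "well_posed n p nx np I ff"
    and A_sub: "A \<subseteq> seqsp n nx" and A_ne: "A \<noteq> {}" and A_closed: "closed_in_seqsp n nx A"
    and K1: "classK \<kappa>1" and K2: "classK \<kappa>2"
    and Kbdd: "\<forall>\<xi>\<in>seqsp n nx. \<forall>\<mu>\<in>seqsp p np.
                 setdist nx A (net_map I ff \<xi> \<mu>) \<le> \<kappa>1 (setdist nx A \<xi>) + \<kappa>2 (supn np \<mu>)"
  shows "((\<exists>V. fs_ISS_Lyap n nx (inp_seqs p np) (net_map I ff) (setdist nx A) (linf np) V)
            \<longrightarrow> is_ISS (seqsp n nx) (inp_seqs p np) (net_map I ff) (setdist nx A) (linf np))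
       \<and> (((\<exists>c. \<forall>s\<ge>0. \<kappa>1 s = c * s) \<and>
            (\<exists>V. fs_eISS_Lyap n nx (inp_seqs p np) (net_map I ff) (setdist nx A) (linf np) V))
            \<longrightarrow> is_eISS (seqsp n nx) (inp_seqs p np) (net_map I ff) (setdist nx A) (linf np))"
proof -
  have sys: "K_bounded_system (seqsp n nx) (inp_seqs p np) (net_map I ff) (setdist nx A) (linf np) \<kappa>1 \<kappa>2"
    by (rule network_K_bounded_system[OF setting wp A_sub A_ne K1 K2 Kbdd])
  have "(\<lambda>k i j. 0) \<in> inp_seqs p np"
    using setting by (intro zero_in_inp_seqs) (simp add: network_setting_def)
  then show ?thesis
    using ISS_if_fs_ISS_Lyap[OF sys] eISS_if_fs_eISS_Lyap[OF sys] by blast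
qed

end
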